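(* The map $\tau_{co}:\widetilde{\mathbb{K}}_{co}\to\widetilde{\mathbb{K}}$, $[(r_\varepsilon)_\varepsilon]\mapsto[(r_\varepsilon)_\varepsilon]$, is not surjective; i.e., there exists an element of $\widetilde{\mathbb{K}}$ having no representative $(r_\varepsilon)_\varepsilon$ with $\varepsilon\mapsto r_\varepsilon$ continuous on $I$.
   Context: Let $I=(0,1]$ and $\mathbb{K}\in\{\mathbb{R},\mathbb{C}\}$. Let $\mathcal{E}_M=\{(r_\varepsilon)_\varepsilon\in\mathbb{K}^I:\exists N\in\mathbb{N}: |r_\varepsilon|=O(\varepsilon^{-N})\text{ as }\varepsilon\to0\}$ and $\mathcal{N}=\{(r_\varepsilon)_\varepsilon\in\mathbb{K}^I:\forall m\in\mathbb{N}: |r_\varepsilon|=O(\varepsilon^{m})\}$, and $\widetilde{\mathbb{K}}=\mathcal{E}_M/\mathcal{N}$. Let $\mathcal{E}_{M,co}$, $\mathcal{N}_{co}$ be the subsets of $\mathcal{E}_M$, $\mathcal{N}$ consisting of nets with $\varepsilon\mapsto r_\varepsilon$ continuous on $I$, and $\widetilde{\mathbb{K}}_{co}=\mathcal{E}_{M,co}/\mathcal{N}_{co}$. The map $\tau_{co}$ is a well-defined injective unital ring homomorphism. *)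

theory Defs
  imports "HOL-Analysis.Analysis"
begin

text \<open>Nets indexed by I = (0,1] are modelled as functions real => 'a; only their
values on I matter for all notions below.\<close>

definition Iset :: "real set" where
  "Iset = {0<..1}"

definition moderate :: "(real \<Rightarrow> 'a::real_normed_vector) \<Rightarrow> bool" where
  "moderate r \<longleftrightarrow> (\<exists>N::nat. \<exists>C \<eta>. \<eta> > 0 \<and>
      (\<forall>\<epsilon>. 0 < \<epsilon> \<and> \<epsilon> \<le> 1 \<and> \<epsilon> < \<eta> \<longrightarrow> norm (r \<epsilon>) \<le> C * inverse (\<epsilon> ^ N)))"

definition negligible :: "(real \<Rightarrow> 'a::real_normed_vector) \<Rightarrow> bool" where
  "negligible r \<longleftrightarrow> (\<forall>m::nat. \<exists>C \<eta>. \<eta> > 0 \<and>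
      (\<forall>\<epsilon>. 0 < \<epsilon> \<and> \<epsilon> \<le> 1 \<and> \<epsilon> < \<eta> \<longrightarrow> norm (r \<epsilon>) \<le> C * \<epsilon> ^ m))"

definition tau_co_not_surj :: "'a::real_normed_vector itself \<Rightarrow> bool" where
  "tau_co_not_surj _ \<longleftrightarrow> (\<exists>r :: real \<Rightarrow> 'a. moderate r \<and>
      \<not> (\<exists>s. moderate s \<and> continuous_on Iset s \<and> negligible (\<lambda>\<epsilon>. r \<epsilon> - s \<epsilon>)))"

end

theory Submission
  imports Defs
begin

text \<open>The net \<open>r\<^sub>\<epsilon> = 1\<close> if \<open>\<lfloor>1/\<epsilon>\<rfloor>\<close> is even and \<open>0\<close> otherwise is bounded, hence moderate,
  but jumps from \<open>0\<close> to \<open>1\<close> at every point \<open>1/(n+1)\<close> with \<open>n\<close> even. A continuous net \<open>s\<close> with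
  \<open>r - s\<close> negligible satisfies \<open>\<parallel>r\<^sub>\<epsilon> - s\<^sub>\<epsilon>\<parallel> \<le> C\<epsilon>\<close> near \<open>0\<close>, so on a small interval
  \<open>[1/(n+1), 1/n]\<close> it stays within \<open>1/4\<close> of a two-valued function that takes both values at the
  endpoints, which the intermediate value theorem forbids.\<close>

lemma two_valued_not_continuously_approximable:
  fixes s r :: "real \<Rightarrow> 'a::metric_space"
  assumes "a \<le> b" and "continuous_on {a..b} s"
    and "r ` {a..b} \<subseteq> {u, v}" and "r a = u" and "r b = v"
    and close: "\<And>x. x \<in> {a..b} \<Longrightarrow> dist (s x) (r x) < dist u v / 2"
  shows False
proof -
  define g where "g x = dist (s x) u - dist (s x) v" for x
  have "continuous_on {a..b} g"
    unfolding g_def by (intro continuous_intros assms(2))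
  moreover have "g a \<le> 0" "0 \<le> g b"
    using close[of a] close[of b] dist_triangle2[of u v "s a"] dist_triangle2[of v u "s b"]
      \<open>a \<le> b\<close> \<open>r a = u\<close> \<open>r b = v\<close>
    by (auto simp: g_def dist_commute)
  ultimately obtain x where x: "x \<in> {a..b}" "g x = 0"
    using IVT'[of g a 0 b] \<open>a \<le> b\<close> by auto
  \<comment> \<open>\<open>s x\<close> is equidistant from \<open>u\<close> and \<open>v\<close>, so at least \<open>dist u v / 2\<close> away from \<open>r x\<close>.\<close>
  moreover have "r x = u \<or> r x = v"
    using assms(3) x(1) by blast
  ultimately have "dist u v / 2 \<le> dist (s x) (r x)"
    using dist_triangle2[of u v "s x"] by (auto simp: g_def dist_commute)
  with close[OF x(1)] show False by simp
qed

definition parity_net :: "real \<Rightarrow> real" where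
  "parity_net \<epsilon> = (if even \<lfloor>1/\<epsilon>\<rfloor> then 1 else 0)"

lemma parity_net_cases: "parity_net \<epsilon> = 0 \<or> parity_net \<epsilon> = 1"
  by (simp add: parity_net_def)

lemma parity_net_at_reciprocals:
  assumes "even n"
  shows "parity_net (1 / real n) = 1" and "parity_net (1 / (real n + 1)) = 0"
  using assms by (simp_all add: parity_net_def del: of_nat_add)

lemma bounded_imp_moderate:
  assumes "\<And>\<epsilon>. norm (r \<epsilon>) \<le> B"
  shows "moderate r"
  unfolding moderate_def using assms by (intro exI[of _ 0] exI[of _ B] exI[of _ 1]) simp

lemma negligible_imp_linear_bound:
  assumes "negligible d"
  obtains C \<eta> where "\<eta> > 0"
    and "\<And>\<epsilon>. 0 < \<epsilon> \<Longrightarrow> \<epsilon> \<le> 1 \<Longrightarrow> \<epsilon> < \<eta> \<Longrightarrow> norm (d \<epsilon>) \<le> C * \<epsilon>"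
  using assms[unfolded negligible_def, rule_format, of 1] by auto

lemma eventually_reciprocal_small:
  fixes C \<eta> :: real
  assumes "\<eta> > 0"
  shows "eventually (\<lambda>n. 1 / real n < \<eta> \<and> \<bar>C\<bar> / real n < 1/4) sequentially"
proof -
  have "(\<lambda>n. \<bar>C\<bar> * (1 / real n)) \<longlonglongrightarrow> \<bar>C\<bar> * 0"
    by (intro tendsto_mult tendsto_const lim_1_over_n)
  then have "eventually (\<lambda>n. \<bar>C\<bar> * (1 / real n) < 1/4) sequentially"
    by (rule order_tendstoD(2)) simp
  moreover have "eventually (\<lambda>n. 1 / real n < \<eta>) sequentially"
    using lim_1_over_n assms by (rule order_tendstoD(2))
  ultimately show ?thesis
    by eventually_elim simp
qed

lemma tau_co_not_surj_algebra: "tau_co_not_surj TYPE('a::real_normed_algebra_1)"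
proof -
  define r :: "real \<Rightarrow> 'a" where "r \<epsilon> = of_real (parity_net \<epsilon>)" for \<epsilon>
  have r_cases: "r \<epsilon> \<in> {0, 1}" for \<epsilon>
    using parity_net_cases[of \<epsilon>] by (auto simp: r_def)
  have "moderate r"
    by (rule bounded_imp_moderate[of _ 1]) (simp add: r_def parity_net_def)
  moreover have "\<not> (moderate s \<and> continuous_on Iset s \<and> negligible (\<lambda>\<epsilon>. r \<epsilon> - s \<epsilon>))" for s
  proof
    assume "moderate s \<and> continuous_on Iset s \<and> negligible (\<lambda>\<epsilon>. r \<epsilon> - s \<epsilon>)"
    then have cont: "continuous_on Iset s" and negl: "negligible (\<lambda>\<epsilon>. r \<epsilon> - s \<epsilon>)" by auto
    from negl obtain C \<eta> where "\<eta> > 0"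
      and bound: "\<And>\<epsilon>. 0 < \<epsilon> \<Longrightarrow> \<epsilon> \<le> 1 \<Longrightarrow> \<epsilon> < \<eta> \<Longrightarrow> norm (r \<epsilon> - s \<epsilon>) \<le> C * \<epsilon>"
      by (rule negligible_imp_linear_bound) blast
    then obtain N where N: "\<And>n. n \<ge> N \<Longrightarrow> 1 / real n < \<eta> \<and> \<bar>C\<bar> / real n < 1/4"
      using eventually_reciprocal_small[of \<eta> C] by (auto simp: eventually_sequentially)
    define n where "n = 2 * (N + 1)"
    define a b where "a = 1 / (real n + 1)" and "b = 1 / real n"
    have n: "even n" "n \<ge> 2" "b < \<eta>" "\<bar>C\<bar> * b < 1/4"
      using N[of n] by (auto simp: n_def b_def)
    have ab: "0 < a" "a \<le> b" "b \<le> 1"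
      using n by (auto simp: a_def b_def field_simps)
    have close: "dist (s x) (r x) < dist (0::'a) 1 / 2" if "x \<in> {a..b}" for x
    proof -
      have "norm (r x - s x) \<le> C * x" using bound[of x] that ab n by auto
      also have "\<dots> \<le> \<bar>C\<bar> * x"
        using that ab by (intro mult_right_mono) auto
      also have "\<dots> \<le> \<bar>C\<bar> * b"
        using that by (intro mult_left_mono) auto
      finally have "norm (r x - s x) \<le> \<bar>C\<bar> * b" .
      then show ?thesis using n by (simp add: dist_norm norm_minus_commute)
    qed
    have "{a..b} \<subseteq> Iset" using ab by (auto simp: Iset_def)
    moreover have "r ` {a..b} \<subseteq> {0, 1}" using r_cases by blast
    moreover have "r a = 0" "r b = 1"
      using parity_net_at_reciprocals[OF \<open>even n\<close>] by (simp_all add: r_def a_def b_def)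
    ultimately show False
      by (intro two_valued_not_continuously_approximable[OF \<open>a \<le> b\<close>
            continuous_on_subset[OF cont] _ _ _ close])
  qed
  ultimately show ?thesis unfolding tau_co_not_surj_def by blast
qed

theorem lemma3p4:
  shows "tau_co_not_surj TYPE(real) \<and> tau_co_not_surj TYPE(complex)"
  using tau_co_not_surj_algebra[where 'a=real] tau_co_not_surj_algebra[where 'a=complex] by blast

end
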